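(* Let $n\ge1$, $\mathbf{k}=(k_1,\dots,k_n)$ positive integers, $N=n+|\mathbf{k}|$, and $D\in\mathcal{D}_{\mathbf{k}}$ with rank tableau $R(D)$. If the indices $1,2,\dots,N$ of $T(D)$ are assigned ranks $r_1,r_2,\dots,r_N$ by the Ranking Algorithm, then $0=r_1\le r_2\le\cdots\le r_N$, and more precisely $r_i-r_{i-1}\in\{0,1\}$ for each $2\le i\le N$.
   Context: $|\mathbf{k}|=k_1+\cdots+k_n$. $\mathcal{D}_{\mathbf{k}}$: sequences $(a_1,\dots,a_N)$ whose positive entries are $k_1,\dots,k_n$ in order, other entries $-1$, all partial sums $a_1+\cdots+a_{i-1}\ge0$. SW-word: $S^{k_j}$ for up step $k_j$, $W$ for $-1$. Filling Algorithm producing $T(D)$: $n$ columns, column $i$ with $k_i+1$ cells in rows $1,\dots,k_i+1$; place $1$ at top of column 1; having placed $1,\dots,i-1$, the lowest filled entry of column $j$ is active if not in row $k_j+1$; if the $i$-th letter of $\texttt{SW}(D)$ is $W$ place $i$ below the smallest active entry, otherwise at the top of the leftmost empty column; continue until $1,\dots,N$ are placed. Entries of $T(D)$ are called indices. Ranking Algorithm (producing $R(D)$, same shape, each box containing the rank of the corresponding index): ranks $0,1,\dots,k_1$ to the column-1 indices top to bottom; for $i=2,\dots,n$, if the top index of column $i$ is $A+1$ and index $A$ has rank $a$, column $i$ indices get ranks $a,a+1,\dots,a+k_i$ top to bottom. *)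

theory Defs
  imports Main
begin

text \<open>Conventions: k = [k_1,...,k_n] is a list of naturals; D = [a_1,...,a_N] is a list of
integers (HOL list index i-1 holds a_i). Columns of the tableau are 0-indexed in HOL
(HOL column j is the paper's column j+1); a column is the list of its entries, top to bottom,
the entry at list position p sitting in row p+1. Indices are 1-based naturals 1..N.\<close>

definition Dk :: "nat list \<Rightarrow> int list set" where
  "Dk k = {D. length D = length k + sum_list k
              \<and> filter (\<lambda>x. x > 0) D = map int k
              \<and> (\<forall>x\<in>set D. x > 0 \<or> x = -1)
              \<and> (\<forall>i. 1 \<le> i \<and> i \<le> length D \<longrightarrow> sum_list (take (i - 1) D) \<ge> 0)}"

definition SW_is_S :: "int list \<Rightarrow> nat \<Rightarrow> bool" where
  "SW_is_S D i = (D ! (i - 1) > 0)"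

definition active_cols :: "nat list \<Rightarrow> nat list list \<Rightarrow> nat set" where
  "active_cols k cols = {j. j < length k \<and> cols ! j \<noteq> [] \<and> length (cols ! j) < k ! j + 1}"

definition fill_step :: "nat list \<Rightarrow> int list \<Rightarrow> nat list list \<Rightarrow> nat \<Rightarrow> nat list list" where
  "fill_step k D cols i =
     (if SW_is_S D i
      then (let c = (LEAST j. j < length k \<and> cols ! j = []) in cols[c := [i]])
      else (let c = (ARG_MIN (\<lambda>j. last (cols ! j)) j. j \<in> active_cols k cols)
            in cols[c := cols ! c @ [i]]))"

definition T :: "nat list \<Rightarrow> int list \<Rightarrow> nat list list" where
  "T k D = foldl (fill_step k D) ([1] # replicate (length k - 1) []) [2..<length D + 1]"

definition col_of :: "nat list list \<Rightarrow> nat \<Rightarrow> nat" where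
  "col_of Tab x = (THE c. c < length Tab \<and> x \<in> set (Tab ! c))"

definition pos_in :: "nat list \<Rightarrow> nat \<Rightarrow> nat" where
  "pos_in xs x = (LEAST p. p < length xs \<and> xs ! p = x)"

definition rank_with :: "nat list list \<Rightarrow> nat list \<Rightarrow> nat \<Rightarrow> nat" where
  "rank_with Tab st x = st ! (col_of Tab x) + pos_in (Tab ! (col_of Tab x)) x"

definition rank_starts :: "nat list list \<Rightarrow> nat list" where
  "rank_starts Tab = foldl (\<lambda>st j. st @ [rank_with Tab st (hd (Tab ! j) - 1)]) [0] [1..<length Tab]"

definition rank :: "nat list list \<Rightarrow> nat \<Rightarrow> nat" where
  "rank Tab x = rank_with Tab (rank_starts Tab) x"

definition R :: "nat list \<Rightarrow> int list \<Rightarrow> nat list list" where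
  "R k D = map (map (rank (T k D))) (T k D)"

end

theory Submission
  imports Defs
begin

(* Track the active entries (lowest entries of the active columns) while the Filling Algorithm
   runs. After 1, ..., i are placed, their ranks are nondecreasing in the index and each lies in
   {r_i - 1, r_i}. An up step starts a column whose top i + 1 inherits the rank of i; a down
   step places i + 1 below the smallest active entry x, so r_(i+1) = r_x + 1 is r_i or r_i + 1,
   and as x has the least rank among the active entries the invariant persists. A down step
   always finds an active column: were all started columns full, the path would be at height 0
   just before a down step. Ranks are read off the final tableau, which extends every
   intermediate one columnwise. *)

lemma foldl_snoc_prefix:
  "\<exists>ys. foldl (\<lambda>st j. st @ [f st j]) xs js = xs @ ys"
proof (induction js arbitrary: xs)
  case (Cons j js)
  then obtain ys where "foldl (\<lambda>st j. st @ [f st j]) (xs @ [f xs j]) js = (xs @ [f xs j]) @ ys"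
    by blast
  then show ?case by auto
qed simp

lemma foldl_snoc_upt_length:
  "a \<le> b \<Longrightarrow> length (foldl (\<lambda>st j. st @ [f st j]) xs [a..<b]) = length xs + (b - a)"
  by (induction b) (auto simp: le_Suc_eq)

lemma foldl_snoc_upt_nth:
  assumes "length xs = a" "a \<le> j" "j < b"
  shows "foldl (\<lambda>st j. st @ [f st j]) xs [a..<b] ! j
         = f (take j (foldl (\<lambda>st j. st @ [f st j]) xs [a..<b])) j"
  using assms(3)
proof (induction b)
  case (Suc b)
  let ?F = "foldl (\<lambda>st j. st @ [f st j]) xs [a..<b]"
  have "a \<le> b" using assms(2) Suc.prems by simp
  then have F: "foldl (\<lambda>st j. st @ [f st j]) xs [a..<Suc b] = ?F @ [f ?F b]"
    and len: "length ?F = b"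
    using foldl_snoc_upt_length[of a b f xs] assms(1) by simp_all
  show ?case
  proof (cases "j = b")
    case True
    then show ?thesis using F len by (simp add: nth_append)
  next
    case False
    then show ?thesis using F len Suc by (simp add: nth_append)
  qed
qed simp

lemma concat_split_nth:
  "c < length xss \<Longrightarrow> concat xss = concat (take c xss) @ xss ! c @ concat (drop (Suc c) xss)"
  by (metis concat.simps(2) concat_append id_take_nth_drop)

lemma concat_list_update:
  "c < length xss \<Longrightarrow> concat (xss[c := ys]) = concat (take c xss) @ ys @ concat (drop (Suc c) xss)"
  by (simp add: upd_conv_take_nth_drop)

lemma distinct_concat_nth_unique:
  assumes "distinct (concat xss)" "a < length xss" "b < length xss"
    and "x \<in> set (xss ! a)" "x \<in> set (xss ! b)"
  shows "a = b"
proof -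
  have False if "a' < b'" "b' < length xss" "x \<in> set (xss ! a')" "x \<in> set (xss ! b')" for a' b'
  proof -
    have "xss ! a' \<in> set (take b' xss)"
      using that by (metis in_set_conv_nth length_take min_less_iff_conj nth_take order.strict_trans)
    then have earlier: "x \<in> set (concat (take b' xss))"
      using that(3) by auto
    have "distinct (concat (take b' xss) @ xss ! b' @ concat (drop (Suc b') xss))"
      using assms(1) concat_split_nth[OF that(2)] by simp
    then have "set (concat (take b' xss)) \<inter> set (xss ! b') = {}"
      by auto
    then show False using earlier that(4) by blast
  qed
  then show ?thesis using assms by (metis linorder_neqE_nat)
qed

lemma nth_update_append_extends: "\<exists>ys. xss[c := xss ! c @ zs] ! j = xss ! j @ ys"
  by (cases "j = c"; cases "c < length xss") (auto simp: list_update_beyond)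

lemma concat_append_to_nth:
  assumes "c < length xss" "distinct (concat xss)" "x \<notin> set (concat xss)"
  shows "distinct (concat (xss[c := xss ! c @ [x]]))"
    and "set (concat (xss[c := xss ! c @ [x]])) = insert x (set (concat xss))"
  using assms concat_list_update[OF assms(1)] concat_split_nth[OF assms(1)] by auto

lemma sum_list_add_length_filter_pos:
  "\<forall>x\<in>set xs. 0 < x \<or> x = (-1::int) \<Longrightarrow>
   sum_list xs + int (length xs)
   = sum_list (filter (\<lambda>x. 0 < x) xs) + int (length (filter (\<lambda>x. 0 < x) xs))"
  by (induction xs) auto

lemma filter_take_eq_take_filter:
  "filter P (take i xs) = take (length (filter P (take i xs))) (filter P xs)"
  by (metis append_eq_conv_conj append_take_drop_id filter_append)

lemma col_of_eq:
  assumes "distinct (concat Tab)" "c < length Tab" "x \<in> set (Tab ! c)"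
  shows "col_of Tab x = c"
  unfolding col_of_def
proof (rule the_equality)
  show "c < length Tab \<and> x \<in> set (Tab ! c)" using assms(2,3) by simp
  show "c' = c" if "c' < length Tab \<and> x \<in> set (Tab ! c')" for c'
    using distinct_concat_nth_unique[OF assms(1)] assms(2,3) that by blast
qed

lemma pos_in_nth:
  "distinct xs \<Longrightarrow> p < length xs \<Longrightarrow> pos_in xs (xs ! p) = p"
  unfolding pos_in_def by (rule Least_equality) (auto simp: nth_eq_iff_index_eq)

lemma rank_with_nth:
  assumes "distinct (concat Tab)" "c < length Tab" "p < length (Tab ! c)"
  shows "rank_with Tab st (Tab ! c ! p) = st ! c + p"
proof -
  have "distinct (Tab ! c)" using assms(1,2) by (simp add: distinct_concat_iff)
  then show ?thesis
    unfolding rank_with_def using col_of_eq[OF assms(1,2)] pos_in_nth assms by simp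
qed

lemma rank_nth:
  "distinct (concat Tab) \<Longrightarrow> c < length Tab \<Longrightarrow> p < length (Tab ! c)
   \<Longrightarrow> rank Tab (Tab ! c ! p) = rank_starts Tab ! c + p"
  unfolding rank_def by (rule rank_with_nth)

lemma rank_starts_first: "rank_starts Tab ! 0 = 0"
proof -
  have "\<exists>ys. rank_starts Tab = [0] @ ys"
    unfolding rank_starts_def by (rule foldl_snoc_prefix)
  then show ?thesis by auto
qed

lemma rank_starts_eq_rank_pred:
  assumes "distinct (concat Tab)" "0 < j" "j < length Tab"
    and "c < j" "hd (Tab ! j) - 1 \<in> set (Tab ! c)"
  shows "rank_starts Tab ! j = rank Tab (hd (Tab ! j) - 1)"
proof -
  let ?st = "rank_starts Tab"
  obtain p where p: "p < length (Tab ! c)" "Tab ! c ! p = hd (Tab ! j) - 1"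
    using assms(5) by (metis in_set_conv_nth)
  have "?st ! j = rank_with Tab (take j ?st) (hd (Tab ! j) - 1)"
    unfolding rank_starts_def by (rule foldl_snoc_upt_nth) (use assms(2,3) in auto)
  also have "\<dots> = ?st ! c + p"
    using rank_with_nth[OF assms(1), of c p] p assms(3,4) by simp
  also have "\<dots> = rank Tab (hd (Tab ! j) - 1)"
    using rank_nth[OF assms(1), of c p] p assms(3,4) by simp
  finally show ?thesis .
qed

definition fill_state :: "nat list \<Rightarrow> int list \<Rightarrow> nat \<Rightarrow> nat list list" where
  "fill_state k D i = foldl (fill_step k D) ([1] # replicate (length k - 1) []) [2..<i + 1]"

lemma fill_state_Suc:
  "1 \<le> i \<Longrightarrow> fill_state k D (Suc i) = fill_step k D (fill_state k D i) (Suc i)"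
  unfolding fill_state_def by simp

lemma T_eq_fill_state: "T k D = fill_state k D (length D)"
  unfolding T_def fill_state_def by simp

context
  fixes k :: "nat list" and D :: "int list"
  assumes n_pos: "length k \<ge> 1"
    and k_pos: "\<forall>j\<in>set k. j > 0"
    and D_in: "D \<in> Dk k"
begin

definition up_count :: "nat \<Rightarrow> nat" where
  "up_count i = length (filter (\<lambda>x. 0 < x) (take i D))"

lemma length_D: "length D = length k + sum_list k"
  using D_in by (simp add: Dk_def)

lemma filter_pos_D: "filter (\<lambda>x. 0 < x) D = map int k"
  using D_in by (simp add: Dk_def)

lemma D_step: "x \<in> set D \<Longrightarrow> 0 < x \<or> x = -1"
  using D_in by (auto simp: Dk_def)

lemma height_nonneg:
  assumes "i < length D"
  shows "0 \<le> sum_list (take i D)"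
proof -
  have "\<forall>j. 1 \<le> j \<and> j \<le> length D \<longrightarrow> 0 \<le> sum_list (take (j - 1) D)"
    using D_in by (simp add: Dk_def)
  from this[rule_format, of "Suc i"] show ?thesis using assms by simp
qed

lemma filter_pos_take: "filter (\<lambda>x. 0 < x) (take i D) = take (up_count i) (map int k)"
  using filter_take_eq_take_filter[of "\<lambda>x. 0 < x" i D] filter_pos_D by (simp add: up_count_def)

lemma up_count_le: "up_count i \<le> length k"
proof -
  have "filter (\<lambda>x. 0 < x) D = filter (\<lambda>x. 0 < x) (take i D) @ filter (\<lambda>x. 0 < x) (drop i D)"
    by (metis append_take_drop_id filter_append)
  then have "up_count i \<le> length (filter (\<lambda>x. 0 < x) D)"
    unfolding up_count_def by (metis le_add1 length_append)
  then show ?thesis using filter_pos_D by simp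
qed

lemma height_take:
  assumes "i \<le> length D"
  shows "sum_list (take i D) + int i = int (sum_list (take (up_count i) k)) + int (up_count i)"
proof -
  have "\<forall>x\<in>set (take i D). 0 < x \<or> x = -1" using D_step by (meson in_set_takeD)
  from sum_list_add_length_filter_pos[OF this]
  have "sum_list (take i D) + int i = sum_list (take (up_count i) (map int k)) + int (up_count i)"
    unfolding filter_pos_take using up_count_le[of i] assms by (simp add: up_count_def)
  then show ?thesis by (simp add: take_map sum_list_of_nat)
qed

lemma up_count_length_D: "up_count (length D) = length k"
  unfolding up_count_def using filter_pos_D by simp

lemma sum_list_D: "sum_list D = 0"
  using height_take[of "length D"] up_count_length_D length_D by simp

lemma length_D_ge_2: "2 \<le> length D"
proof -
  have "length k \<le> sum_list k" using k_pos by (induction k) auto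
  then show ?thesis using length_D n_pos by simp
qed

lemma first_step_up: "0 < D ! 0"
proof -
  have "0 \<le> sum_list (take 1 D)" using height_nonneg[of 1] length_D_ge_2 by simp
  moreover have "take 1 D = [D ! 0]" and "D ! 0 \<in> set D" using length_D_ge_2 by (cases D; simp)+
  ultimately show ?thesis using D_step by fastforce
qed

lemma up_count_Suc_up: "i < length D \<Longrightarrow> 0 < D ! i \<Longrightarrow> up_count (Suc i) = Suc (up_count i)"
  unfolding up_count_def by (simp add: take_Suc_conv_app_nth)

lemma up_count_Suc_down: "i < length D \<Longrightarrow> \<not> 0 < D ! i \<Longrightarrow> up_count (Suc i) = up_count i"
  unfolding up_count_def by (simp add: take_Suc_conv_app_nth)

lemma up_count_one: "up_count 1 = 1"
  unfolding up_count_def using first_step_up length_D_ge_2 by (cases D) auto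

lemma up_count_pos:
  assumes "1 \<le> i"
  shows "0 < up_count i"
proof -
  have "take i D ! 0 = D ! 0" "0 < length (take i D)" using assms length_D_ge_2 by auto
  then have "D ! 0 \<in> set (take i D)" using nth_mem[of 0 "take i D"] by simp
  then have "filter (\<lambda>x. 0 < x) (take i D) \<noteq> []"
    using first_step_up by (auto simp: filter_empty_conv)
  then show ?thesis unfolding up_count_def by simp
qed

lemma height_before_down_step:
  assumes "i < length D" "\<not> 0 < D ! i"
  shows "1 \<le> sum_list (take i D)"
proof -
  have "D ! i = -1" using D_step assms by (meson nth_mem)
  moreover have "sum_list (take (Suc i) D) = sum_list (take i D) + D ! i"
    using assms(1) by (simp add: take_Suc_conv_app_nth)
  moreover have "0 \<le> sum_list (take (Suc i) D)"
    using height_nonneg[of "Suc i"] sum_list_D by (cases "Suc i < length D") auto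
  ultimately show ?thesis by simp
qed

(* The predecessor clause makes the Ranking Algorithm well defined: the predecessor of the top of
   every later column sits in an earlier column. *)
definition fill_inv :: "nat \<Rightarrow> nat list list \<Rightarrow> bool" where
  "fill_inv i cols \<longleftrightarrow> length cols = length k
    \<and> (\<forall>j<length k. (cols ! j \<noteq> []) = (j < up_count i))
    \<and> (\<forall>j<length k. length (cols ! j) \<le> k ! j + 1)
    \<and> distinct (concat cols) \<and> set (concat cols) = {1..i}
    \<and> (\<forall>j. 0 < j \<and> j < length k \<and> cols ! j \<noteq> [] \<longrightarrow> (\<exists>c<j. hd (cols ! j) - 1 \<in> set (cols ! c)))
    \<and> hd (cols ! 0) = 1"

lemma fill_inv_init: "fill_inv 1 (fill_state k D 1)"
proof -
  have "0 < k ! 0" using k_pos n_pos by (cases k) auto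
  then show ?thesis
    unfolding fill_inv_def fill_state_def using n_pos up_count_one
    by (auto simp: nth_Cons split: nat.splits)
qed

lemma fill_step_up:
  assumes "fill_inv i cols" "1 \<le> i" "i < length D" "0 < D ! i"
  shows "up_count i < length k" "0 < up_count i" "cols ! up_count i = []"
    and "fill_step k D cols (Suc i) = cols[up_count i := [Suc i]]"
proof -
  show lt: "up_count i < length k"
    using up_count_Suc_up[OF assms(3,4)] up_count_le[of "Suc i"] by simp
  show "0 < up_count i" using up_count_pos assms(2) by simp
  show empty: "cols ! up_count i = []" using assms(1) lt unfolding fill_inv_def by blast
  have "(LEAST j. j < length k \<and> cols ! j = []) = up_count i"
  proof (rule Least_equality)
    show "up_count i < length k \<and> cols ! up_count i = []" using lt empty by simp
    show "up_count i \<le> j" if "j < length k \<and> cols ! j = []" for j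
      using assms(1) that unfolding fill_inv_def by (meson not_le)
  qed
  then show "fill_step k D cols (Suc i) = cols[up_count i := [Suc i]]"
    using assms(4) by (simp add: fill_step_def SW_is_S_def)
qed

lemma active_cols_nonempty:
  assumes inv: "fill_inv i cols" and "i < length D" "\<not> 0 < D ! i"
  shows "active_cols k cols \<noteq> {}"
proof
  assume no_active: "active_cols k cols = {}"
  have len: "length cols = length k" and distinct: "distinct (concat cols)"
    and entries: "set (concat cols) = {1..i}"
    using inv unfolding fill_inv_def by auto
  have full: "length (cols ! j) = (if j < up_count i then k ! j + 1 else 0)" if "j < length k" for j
  proof -
    have "\<not> (cols ! j \<noteq> [] \<and> length (cols ! j) < k ! j + 1)"
      using no_active that unfolding active_cols_def by blast
    moreover have "length (cols ! j) \<le> k ! j + 1" "(cols ! j \<noteq> []) = (j < up_count i)"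
      using inv that unfolding fill_inv_def by auto
    ultimately show ?thesis by auto
  qed
  have "i = length (concat cols)"
    using distinct entries by (metis card_atLeastAtMost diff_Suc_1 distinct_card)
  also have "\<dots> = (\<Sum>j<length k. if j < up_count i then k ! j + 1 else 0)"
    using full len by (simp add: length_concat sum_list_sum_nth atLeast0LessThan)
  also have "\<dots> = (\<Sum>j<up_count i. k ! j + 1)"
  proof -
    have "{..<length k} \<inter> {j. j < up_count i} = {..<up_count i}" using up_count_le[of i] by auto
    then show ?thesis by (simp add: sum.If_cases)
  qed
  also have "\<dots> = sum_list (take (up_count i) k) + up_count i"
    unfolding sum.distrib using up_count_le[of i]
    by (simp add: sum_list_sum_nth atLeast0LessThan min_absorb2)
  finally have "sum_list (take i D) = 0" using height_take[of i] assms(2) by simp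
  then show False using height_before_down_step[OF assms(2,3)] by simp
qed

lemma fill_step_down:
  assumes "fill_inv i cols" "i < length D" "\<not> 0 < D ! i"
  obtains c where "c \<in> active_cols k cols"
    and "\<forall>j\<in>active_cols k cols. last (cols ! c) \<le> last (cols ! j)"
    and "fill_step k D cols (Suc i) = cols[c := cols ! c @ [Suc i]]"
proof -
  obtain j0 where j0: "j0 \<in> active_cols k cols" using active_cols_nonempty[OF assms] by blast
  define c where "c = (ARG_MIN (\<lambda>j. last (cols ! j)) j. j \<in> active_cols k cols)"
  have "c \<in> active_cols k cols \<and> (\<forall>j. j \<in> active_cols k cols \<longrightarrow> last (cols ! c) \<le> last (cols ! j))"
    unfolding c_def by (rule arg_min_nat_lemma[where P = "\<lambda>j. j \<in> active_cols k cols", OF j0])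
  moreover have "fill_step k D cols (Suc i) = cols[c := cols ! c @ [Suc i]]"
    using assms(3) by (simp add: fill_step_def SW_is_S_def Let_def c_def)
  ultimately show ?thesis using that by blast
qed

lemma fill_inv_up:
  assumes inv: "fill_inv i cols" and step: "1 \<le> i" "i < length D" "0 < D ! i"
  shows "fill_inv (Suc i) (cols[up_count i := [Suc i]])"
proof -
  let ?c = "up_count i"
  let ?cs = "cols[?c := [Suc i]]"
  have c: "?c < length k" "0 < ?c" "cols ! ?c = []" using fill_step_up[OF inv step] by auto
  have len: "length cols = length k" and nonempty: "\<forall>j<length k. (cols ! j \<noteq> []) = (j < ?c)"
    and distinct: "distinct (concat cols)" and entries: "set (concat cols) = {1..i}"
    and pred: "\<forall>j. 0 < j \<and> j < length k \<and> cols ! j \<noteq> [] \<longrightarrow> (\<exists>c<j. hd (cols ! j) - 1 \<in> set (cols ! c))"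
    using inv unfolding fill_inv_def by auto
  have fresh: "Suc i \<notin> set (concat cols)" using entries by simp
  have cs: "?cs = cols[?c := cols ! ?c @ [Suc i]]" using c(3) by simp
  have "\<exists>c0<j. hd (?cs ! j) - 1 \<in> set (?cs ! c0)"
    if j: "0 < j" "j < length k" "?cs ! j \<noteq> []" for j
  proof (cases "j = ?c")
    case True
    obtain c0 where c0: "c0 < length cols" "i \<in> set (cols ! c0)"
      using entries step(1) by (metis atLeastAtMost_iff in_set_conv_nth order.refl set_concat UN_E)
    then have "c0 < ?c" using nonempty len by (metis empty_iff empty_set)
    then show ?thesis using True c0 c(1) len by auto
  next
    case False
    then obtain c0 where c0: "c0 < j" "hd (cols ! j) - 1 \<in> set (cols ! c0)"
      using pred j by auto
    then have "c0 \<noteq> ?c" using c(3) by auto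
    then show ?thesis using c0 False by auto
  qed
  moreover have "(?cs ! j \<noteq> []) = (j < up_count (Suc i))" if "j < length k" for j
    using nonempty that up_count_Suc_up[OF step(2,3)] c(1) len by (cases "j = ?c") auto
  moreover have "length (?cs ! j) \<le> k ! j + 1" if "j < length k" for j
    using inv that unfolding fill_inv_def by (cases "j = ?c") auto
  moreover have "distinct (concat ?cs)" "set (concat ?cs) = {1..Suc i}"
    using concat_append_to_nth[of ?c, OF _ distinct fresh] c(1) len entries
    unfolding cs by auto
  ultimately show ?thesis
    using inv c(2) len unfolding fill_inv_def by auto
qed

lemma fill_inv_down:
  assumes inv: "fill_inv i cols" and step: "1 \<le> i" "i < length D" "\<not> 0 < D ! i"
    and c: "c \<in> active_cols k cols"
  shows "fill_inv (Suc i) (cols[c := cols ! c @ [Suc i]])"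
proof -
  let ?cs = "cols[c := cols ! c @ [Suc i]]"
  have len: "length cols = length k" and nonempty: "\<forall>j<length k. (cols ! j \<noteq> []) = (j < up_count i)"
    and distinct: "distinct (concat cols)" and entries: "set (concat cols) = {1..i}"
    and pred: "\<forall>j. 0 < j \<and> j < length k \<and> cols ! j \<noteq> [] \<longrightarrow> (\<exists>c<j. hd (cols ! j) - 1 \<in> set (cols ! c))"
    using inv unfolding fill_inv_def by auto
  have fresh: "Suc i \<notin> set (concat cols)" using entries by simp
  have c: "c < length k" "cols ! c \<noteq> []" "length (cols ! c) < k ! c + 1"
    using c unfolding active_cols_def by auto
  have first_col: "cols ! 0 \<noteq> []"
    using nonempty up_count_pos[OF step(1)] n_pos by (simp add: Suc_le_eq)
  have hd_cs: "hd (?cs ! j) = hd (cols ! j)" if "cols ! j \<noteq> []" for j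
    using that c len by (cases "j = c") auto
  have nonempty_cs: "(?cs ! j \<noteq> []) = (cols ! j \<noteq> [])" if "j < length k" for j
    using that c len by (cases "j = c") auto
  have "set (cols ! j) \<subseteq> set (?cs ! j)" for j
    using c len by (cases "j = c") auto
  then have "\<exists>c0<j. hd (?cs ! j) - 1 \<in> set (?cs ! c0)"
    if "0 < j" "j < length k" "?cs ! j \<noteq> []" for j
    using pred that nonempty_cs hd_cs by (metis subsetD)
  moreover have "(?cs ! j \<noteq> []) = (j < up_count (Suc i))" if "j < length k" for j
    using nonempty nonempty_cs that up_count_Suc_down[OF step(2,3)] by simp
  moreover have "length (?cs ! j) \<le> k ! j + 1" if "j < length k" for j
    using inv that c len unfolding fill_inv_def by (cases "j = c") auto
  moreover have "distinct (concat ?cs)" "set (concat ?cs) = {1..Suc i}"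
    using concat_append_to_nth[of c, OF _ distinct fresh] c(1) len entries by auto
  moreover have "hd (?cs ! 0) = 1"
    using inv hd_cs[OF first_col] unfolding fill_inv_def by auto
  ultimately show ?thesis
    using len unfolding fill_inv_def by auto
qed

lemma fill_inv_Suc:
  assumes inv: "fill_inv i cols" and "1 \<le> i" "i < length D"
  shows "fill_inv (Suc i) (fill_step k D cols (Suc i))"
    and "\<exists>ys. fill_step k D cols (Suc i) ! j = cols ! j @ ys"
proof -
  have "fill_inv (Suc i) (fill_step k D cols (Suc i))
        \<and> (\<exists>c. fill_step k D cols (Suc i) = cols[c := cols ! c @ [Suc i]])"
  proof (cases "0 < D ! i")
    case True
    then show ?thesis
      using fill_step_up[OF inv assms(2,3) True] fill_inv_up[OF inv assms(2,3) True]
      by (auto intro!: exI[of _ "up_count i"])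
  next
    case False
    then obtain c where "c \<in> active_cols k cols" "fill_step k D cols (Suc i) = cols[c := cols ! c @ [Suc i]]"
      using fill_step_down[OF inv assms(3)] by metis
    then show ?thesis using fill_inv_down[OF inv assms(2,3) False] by auto
  qed
  then show "fill_inv (Suc i) (fill_step k D cols (Suc i))"
    and "\<exists>ys. fill_step k D cols (Suc i) ! j = cols ! j @ ys"
    using nth_update_append_extends by auto
qed

lemma fill_inv_fill_state: "1 \<le> i \<Longrightarrow> i \<le> length D \<Longrightarrow> fill_inv i (fill_state k D i)"
proof (induction i rule: dec_induct)
  case base
  show ?case by (rule fill_inv_init)
next
  case (step i)
  then show ?case using fill_inv_Suc(1) fill_state_Suc by simp
qed

lemma fill_state_extends:
  assumes "1 \<le> i" "i \<le> i'" "i' \<le> length D"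
  shows "\<exists>ys. fill_state k D i' ! j = fill_state k D i ! j @ ys"
  using assms(2,3)
proof (induction i' rule: dec_induct)
  case (step m)
  have "fill_inv m (fill_state k D m)"
    using fill_inv_fill_state assms(1) step by simp
  then obtain zs where "fill_state k D (Suc m) ! j = fill_state k D m ! j @ zs"
    using fill_inv_Suc(2) fill_state_Suc assms(1) step by (metis Suc_le_eq order_trans)
  moreover obtain ys where "fill_state k D m ! j = fill_state k D i ! j @ ys"
    using step by auto
  ultimately show ?case by auto
qed simp

lemma T_extends_fill_state:
  "1 \<le> i \<Longrightarrow> i \<le> length D \<Longrightarrow> \<exists>ys. T k D ! j = fill_state k D i ! j @ ys"
  using fill_state_extends[of i "length D"] T_eq_fill_state by simp

lemma fill_inv_T: "fill_inv (length D) (T k D)"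
  using fill_inv_fill_state[of "length D"] length_D_ge_2 T_eq_fill_state by simp

lemma length_T: "length (T k D) = length k"
  using fill_inv_T unfolding fill_inv_def by simp

lemma distinct_T: "distinct (concat (T k D))"
  using fill_inv_T unfolding fill_inv_def by simp

lemma T_col_nonempty: "j < length k \<Longrightarrow> T k D ! j \<noteq> []"
  using fill_inv_T up_count_length_D unfolding fill_inv_def by simp

lemma T_col_top_pred:
  "0 < j \<Longrightarrow> j < length k \<Longrightarrow> \<exists>c<j. hd (T k D ! j) - 1 \<in> set (T k D ! c)"
  using fill_inv_T T_col_nonempty unfolding fill_inv_def by simp

abbreviation rank_T :: "nat \<Rightarrow> nat" where
  "rank_T \<equiv> rank (T k D)"

lemma rank_T_first: "rank_T 1 = 0"
proof -
  have "0 < length k" using n_pos by linarith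
  then have "T k D ! 0 \<noteq> []" by (rule T_col_nonempty)
  moreover have "hd (T k D ! 0) = 1" using fill_inv_T unfolding fill_inv_def by simp
  ultimately have "T k D ! 0 ! 0 = 1" by (simp add: hd_conv_nth)
  then show ?thesis
    using rank_nth[OF distinct_T, of 0 0] rank_starts_first \<open>T k D ! 0 \<noteq> []\<close> \<open>0 < length k\<close> length_T
    by simp
qed

definition active_ends :: "nat list list \<Rightarrow> nat set" where
  "active_ends cols = (\<lambda>j. last (cols ! j)) ` active_cols k cols"

definition rank_inv :: "nat \<Rightarrow> nat list list \<Rightarrow> bool" where
  "rank_inv i cols \<longleftrightarrow>
     (\<forall>x\<in>active_ends cols. rank_T x \<le> rank_T i \<and> rank_T i \<le> Suc (rank_T x))
     \<and> (\<forall>x\<in>active_ends cols. \<forall>y\<in>active_ends cols. x < y \<longrightarrow> rank_T x \<le> rank_T y)"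

lemma active_ends_subset:
  assumes "fill_inv i cols"
  shows "active_ends cols \<subseteq> {1..i}"
proof
  fix x assume "x \<in> active_ends cols"
  then obtain j where j: "j \<in> active_cols k cols" "x = last (cols ! j)"
    unfolding active_ends_def by blast
  then have "cols ! j \<in> set cols" "x \<in> set (cols ! j)"
    using assms unfolding active_cols_def fill_inv_def by auto
  then show "x \<in> {1..i}" using assms unfolding fill_inv_def by auto
qed

lemma active_ends_update:
  "active_ends (cols[c := ys]) \<subseteq> insert (last ys) (active_ends cols)"
proof
  fix x assume "x \<in> active_ends (cols[c := ys])"
  then obtain j where j: "j \<in> active_cols k (cols[c := ys])" "x = last (cols[c := ys] ! j)"
    unfolding active_ends_def by blast
  show "x \<in> insert (last ys) (active_ends cols)"
  proof (cases "j = c \<and> c < length cols")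
    case True
    then show ?thesis using j(2) by simp
  next
    case False
    then have "cols[c := ys] ! j = cols ! j" by (metis list_update_beyond not_le nth_list_update_neq)
    then show ?thesis using j unfolding active_ends_def active_cols_def by auto
  qed
qed

lemma rank_inv_init: "rank_inv 1 (fill_state k D 1)"
  using active_ends_subset[OF fill_inv_init] unfolding rank_inv_def by auto

lemma rank_inv_extend:
  assumes "rank_inv i cols" "fill_inv i cols"
    and new_ends: "active_ends cols' \<subseteq> insert (Suc i) (active_ends cols)"
    and near: "\<forall>x\<in>active_ends cols. rank_T x \<le> rank_T (Suc i) \<and> rank_T (Suc i) \<le> Suc (rank_T x)"
  shows "rank_inv (Suc i) cols'"
  unfolding rank_inv_def
proof (intro conjI ballI impI)
  fix x assume "x \<in> active_ends cols'"
  then have "x \<in> active_ends cols \<or> x = Suc i" using new_ends by blast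
  then show "rank_T x \<le> rank_T (Suc i)" "rank_T (Suc i) \<le> Suc (rank_T x)" using near by auto
next
  fix x y assume xy: "x \<in> active_ends cols'" "y \<in> active_ends cols'" "x < y"
  have below: "\<forall>x\<in>active_ends cols. x < Suc i" using active_ends_subset[OF assms(2)] by auto
  have "x \<in> active_ends cols \<or> x = Suc i" "y \<in> active_ends cols \<or> y = Suc i"
    using xy(1,2) new_ends by blast+
  then show "rank_T x \<le> rank_T y"
    using xy(3) below near assms(1) unfolding rank_inv_def by fastforce
qed

lemma rank_up_step:
  assumes "1 \<le> i" "i < length D" "0 < D ! i"
  shows "rank_T (Suc i) = rank_T i"
proof -
  let ?c = "up_count i"
  have inv: "fill_inv i (fill_state k D i)" using fill_inv_fill_state assms(1,2) by simp
  note up = fill_step_up[OF inv assms]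
  obtain ys where col: "T k D ! ?c = [Suc i] @ ys"
    using T_extends_fill_state[of "Suc i" ?c] fill_state_Suc[OF assms(1)] up(1,4) assms inv
    unfolding fill_inv_def by auto
  obtain c0 where "c0 < ?c" "hd (T k D ! ?c) - 1 \<in> set (T k D ! c0)"
    using T_col_top_pred[OF up(2,1)] by blast
  then have "rank_starts (T k D) ! ?c = rank_T i"
    using rank_starts_eq_rank_pred[OF distinct_T up(2)] up(1) length_T col by simp
  then show ?thesis
    using rank_nth[OF distinct_T, of ?c 0] up(1) length_T col by simp
qed

lemma rank_down_step:
  assumes "1 \<le> i" "i < length D" "c \<in> active_cols k (fill_state k D i)"
    and "fill_state k D (Suc i) = (fill_state k D i)[c := fill_state k D i ! c @ [Suc i]]"
  shows "rank_T (Suc i) = Suc (rank_T (last (fill_state k D i ! c)))"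
proof -
  let ?col = "fill_state k D i ! c"
  have c: "c < length k" "?col \<noteq> []" using assms(3) unfolding active_cols_def by auto
  have "length (fill_state k D i) = length k"
    using fill_inv_fill_state assms(1,2) unfolding fill_inv_def by simp
  then obtain ys where col: "T k D ! c = ?col @ [Suc i] @ ys"
    using T_extends_fill_state[of "Suc i" c] assms(1,2,4) c(1) by auto
  have "rank_T (Suc i) = rank_starts (T k D) ! c + length ?col"
    using rank_nth[OF distinct_T, of c "length ?col"] c(1) length_T col by (simp add: nth_append)
  moreover have "rank_T (last ?col) = rank_starts (T k D) ! c + (length ?col - 1)"
    using rank_nth[OF distinct_T, of c "length ?col - 1"] c length_T col
    by (simp add: nth_append last_conv_nth)
  ultimately show ?thesis using c(2) by simp
qed

lemma rank_inv_up:
  assumes "1 \<le> i" "i < length D" "0 < D ! i" and rinv: "rank_inv i (fill_state k D i)"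
  shows "rank_inv (Suc i) (fill_state k D (Suc i))" and "rank_T (Suc i) = rank_T i"
proof -
  let ?cols = "fill_state k D i"
  have inv: "fill_inv i ?cols" using fill_inv_fill_state assms(1,2) by simp
  have "active_ends (fill_state k D (Suc i)) \<subseteq> insert (Suc i) (active_ends ?cols)"
    using active_ends_update[of ?cols "up_count i" "[Suc i]"] fill_state_Suc[OF assms(1)]
      fill_step_up(4)[OF inv assms(1-3)]
    by simp
  moreover have "\<forall>x\<in>active_ends ?cols. rank_T x \<le> rank_T i \<and> rank_T i \<le> Suc (rank_T x)"
    using rinv unfolding rank_inv_def by auto
  moreover show "rank_T (Suc i) = rank_T i" by (rule rank_up_step[OF assms(1-3)])
  ultimately show "rank_inv (Suc i) (fill_state k D (Suc i))"
    using rank_inv_extend[OF rinv inv] by simp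
qed

lemma rank_inv_down:
  assumes "1 \<le> i" "i < length D" "\<not> 0 < D ! i" and rinv: "rank_inv i (fill_state k D i)"
  shows "rank_inv (Suc i) (fill_state k D (Suc i))"
    and "rank_T (Suc i) = rank_T i \<or> rank_T (Suc i) = Suc (rank_T i)"
proof -
  let ?cols = "fill_state k D i"
  have inv: "fill_inv i ?cols" using fill_inv_fill_state assms(1,2) by simp
  have near: "\<forall>x\<in>active_ends ?cols. rank_T x \<le> rank_T i \<and> rank_T i \<le> Suc (rank_T x)"
    and mono: "\<forall>x\<in>active_ends ?cols. \<forall>y\<in>active_ends ?cols. x < y \<longrightarrow> rank_T x \<le> rank_T y"
    using rinv unfolding rank_inv_def by auto
  obtain c where c: "c \<in> active_cols k ?cols"
    and least: "\<forall>j\<in>active_cols k ?cols. last (?cols ! c) \<le> last (?cols ! j)"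
    and step: "fill_state k D (Suc i) = ?cols[c := ?cols ! c @ [Suc i]]"
    using fill_step_down[OF inv assms(2,3)] fill_state_Suc[OF assms(1)] by metis
  let ?x = "last (?cols ! c)"
  have x: "?x \<in> active_ends ?cols" using c unfolding active_ends_def by blast
  have "\<forall>y\<in>active_ends ?cols. ?x \<le> y" using least unfolding active_ends_def by blast
  then have x_least: "\<forall>y\<in>active_ends ?cols. rank_T ?x \<le> rank_T y"
    using mono x by (metis order.order_iff_strict order_refl)
  have r: "rank_T (Suc i) = Suc (rank_T ?x)" by (rule rank_down_step[OF assms(1,2) c step])
  then show "rank_T (Suc i) = rank_T i \<or> rank_T (Suc i) = Suc (rank_T i)"
    using near x by force
  have "\<forall>y\<in>active_ends ?cols. rank_T y \<le> rank_T (Suc i) \<and> rank_T (Suc i) \<le> Suc (rank_T y)"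
  proof
    fix y assume "y \<in> active_ends ?cols"
    then have "rank_T y \<le> rank_T i" "rank_T i \<le> Suc (rank_T ?x)" "rank_T ?x \<le> rank_T y"
      using near x_least x by auto
    then show "rank_T y \<le> rank_T (Suc i) \<and> rank_T (Suc i) \<le> Suc (rank_T y)" using r by linarith
  qed
  moreover have "active_ends (fill_state k D (Suc i)) \<subseteq> insert (Suc i) (active_ends ?cols)"
    using active_ends_update[of ?cols c "?cols ! c @ [Suc i]"] step by simp
  ultimately show "rank_inv (Suc i) (fill_state k D (Suc i))"
    using rank_inv_extend[OF rinv inv] by blast
qed

lemma rank_inv_Suc:
  assumes "1 \<le> i" "i < length D" "rank_inv i (fill_state k D i)"
  shows "rank_inv (Suc i) (fill_state k D (Suc i))"
    and "rank_T (Suc i) = rank_T i \<or> rank_T (Suc i) = Suc (rank_T i)"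
  using rank_inv_up[OF assms(1,2) _ assms(3)] rank_inv_down[OF assms(1,2) _ assms(3)]
  by (cases "0 < D ! i"; simp)+

lemma rank_inv_fill_state: "1 \<le> i \<Longrightarrow> i \<le> length D \<Longrightarrow> rank_inv i (fill_state k D i)"
proof (induction i rule: dec_induct)
  case base
  show ?case by (rule rank_inv_init)
next
  case (step i)
  then show ?case using rank_inv_Suc(1) by simp
qed

lemma rank_T_Suc:
  "1 \<le> i \<Longrightarrow> i < length D \<Longrightarrow> rank_T (Suc i) = rank_T i \<or> rank_T (Suc i) = Suc (rank_T i)"
  using rank_inv_Suc(2) rank_inv_fill_state by simp

lemma rank_T_mono:
  assumes "1 \<le> i" "i \<le> j" "j \<le> length D"
  shows "rank_T i \<le> rank_T j"
  using assms(2,3)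
proof (induction j rule: dec_induct)
  case (step j)
  then show ?case using rank_T_Suc[of j] assms(1) by fastforce
qed simp

end

theorem mainTheorem6:
  fixes k :: "nat list" and D :: "int list" and N :: nat and r :: "nat \<Rightarrow> nat"
  assumes n_pos: "length k \<ge> 1"
    and k_pos: "\<forall>j\<in>set k. j > 0"
    and N_def: "N = length k + sum_list k"
    and D_in: "D \<in> Dk k"
    and r_def: "\<forall>i. 1 \<le> i \<and> i \<le> N \<longrightarrow>
                   (\<exists>c p. c < length (T k D) \<and> p < length (T k D ! c)
                          \<and> T k D ! c ! p = i \<and> r i = R k D ! c ! p)"
  shows "r 1 = 0
         \<and> (\<forall>i j. 1 \<le> i \<and> i \<le> j \<and> j \<le> N \<longrightarrow> r i \<le> r j)
         \<and> (\<forall>i. 2 \<le> i \<and> i \<le> N \<longrightarrow> r i = r (i - 1) \<or> r i = r (i - 1) + 1)"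
proof -
  note setting = n_pos k_pos D_in
  have N: "N = length D" using length_D[OF setting] N_def by simp
  have r: "r i = rank (T k D) i" if "1 \<le> i" "i \<le> N" for i
    using r_def that unfolding R_def by auto
  have "1 \<le> N" using length_D_ge_2[OF setting] N by simp
  then have "r 1 = 0" using r rank_T_first[OF setting] by simp
  moreover have "r i \<le> r j" if "1 \<le> i" "i \<le> j" "j \<le> N" for i j
    using that r rank_T_mono[OF setting] N by simp
  moreover have "r i = r (i - 1) \<or> r i = r (i - 1) + 1" if "2 \<le> i" "i \<le> N" for i
    using that r[of i] r[of "i - 1"] rank_T_Suc[OF setting, of "i - 1"] N by simp
  ultimately show ?thesis by blast
qed

end
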